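(* Consider the real ODE system $$\frac{dp}{dt}=p\,(pR(v_c)-Q(v_c)),\qquad \frac{dv_c}{dt}=-\frac{p}{4}(1+v_c^2)+\frac12(1-v_c^2),$$ with $R(v)=\frac12\left(\frac1v-v\right)$, $Q(v)=\frac12\left(\frac1v+v\right)$. Fix $c_1$ with $0<c_1<\frac{3+\sqrt{73}}{8}$ and let $p_1(v)=1+c_1H(v-1)(v-1)$, $p_2(v)=-1-c_1H(1-v)(v^{-1}-1)$ for $v>0$, where $H$ is the Heaviside function, and $\Omega=\{(v,p):v>0,\ p_2(v)\le p\le p_1(v)\}$. Then for every initial datum $(v_c(0),p(0))\in\Omega$ the solution exists for all $t>0$, satisfies $(v_c(t),p(t))\in\Omega$ for all $t>0$, $v_c(t)$ stays bounded away from $0$ and from $\infty$, and $p(t)\to0$ as $t\to\infty$.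
   Context: This system is the form, with dissipation coefficient normalized to $\nu=1$, of the pole-dynamics ODEs for the generalized Constantin–Lax–Majda equation with $a=1/2$, $\sigma=1$, written in the variable $p=\omega_{-2,i}/(v_c(1-v_c^2))$, where $v_c>0$ is the pole position parameter and $\omega_{-2,i}$ the real double-pole amplitude. *)

theory Defs
  imports "HOL-Analysis.Analysis"
begin

definition heaviside :: "real \<Rightarrow> real" where
  "heaviside x = (if x \<ge> 0 then 1 else 0)"

definition Rf :: "real \<Rightarrow> real" where
  "Rf v = (1/v - v) / 2"

definition Qf :: "real \<Rightarrow> real" where
  "Qf v = (1/v + v) / 2"

definition p1 :: "real \<Rightarrow> real \<Rightarrow> real" where
  "p1 c1 v = 1 + c1 * heaviside (v - 1) * (v - 1)"

definition p2 :: "real \<Rightarrow> real \<Rightarrow> real" where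
  "p2 c1 v = -1 - c1 * heaviside (1 - v) * (1/v - 1)"

definition Omega :: "real \<Rightarrow> (real \<times> real) set" where
  "Omega c1 = {(v, p). v > 0 \<and> p2 c1 v \<le> p \<and> p \<le> p1 c1 v}"

end

theory Submission
  imports Defs "HOL-Real_Asymp.Real_Asymp"
begin

(*
  Freezing the vector field outside a compact box containing the region
  {vlo \<le> v \<le> vhi} \<inter> \<Omega> makes it globally Lipschitz, so Picard iteration yields a global
  solution. This region is forward invariant: on each piece of its boundary the field points
  strictly inward. On the upper curve p = 1 + c1 (v - 1) this is a quartic inequality in
  w = v - 1, valid for all w \<ge> 0 as soon as 4 c1\<^sup>2 - 3 c1 - 4 < 0, i.e.
  c1 < (3 + \<surd>73)/8; the symmetry (v, p) \<mapsto> (1/v, -p) maps the lower curve onto the upper one.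
  Hence the solution never sees the freezing, v stays in [vlo, vhi], and there
  p R(v) - Q(v) \<le> -min vlo (1/vhi), so p decays exponentially.
*)

section \<open>Picard iteration for globally Lipschitz fields\<close>

primrec picard_iter :: "('a::banach \<Rightarrow> 'a) \<Rightarrow> 'a \<Rightarrow> nat \<Rightarrow> real \<Rightarrow> 'a" where
  "picard_iter f x0 0 = (\<lambda>t. x0)"
| "picard_iter f x0 (Suc n) = (\<lambda>t. x0 + integral {0..t} (\<lambda>s. f (picard_iter f x0 n s)))"

declare picard_iter.simps(2)[simp del]

lemma continuous_on_picard_iter:
  assumes "continuous_on UNIV f"
  shows "continuous_on {0..T} (picard_iter f x0 n)"
proof (induction n)
  case 0
  then show ?case by simp
next
  case (Suc n)
  have "continuous_on {0..T} (\<lambda>s. f (picard_iter f x0 n s))"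
    by (rule continuous_on_compose2[OF assms Suc]) auto
  then have "continuous_on {0..T} (\<lambda>t. integral {0..t} (\<lambda>s. f (picard_iter f x0 n s)))"
    by (intro indefinite_integral_continuous_1 integrable_continuous_interval)
  then show ?case
    by (auto intro!: continuous_intros simp: picard_iter.simps(2))
qed

lemma picard_iter_step_le:
  fixes f :: "'a::banach \<Rightarrow> 'a"
  assumes lip: "L-lipschitz_on UNIV f" and "0 \<le> t"
  shows "norm (picard_iter f x0 (Suc n) t - picard_iter f x0 n t)
           \<le> norm (f x0) * L ^ n * t ^ Suc n / fact (Suc n)"
  using \<open>0 \<le> t\<close>
proof (induction n arbitrary: t)
  case 0
  then show ?case by (simp add: picard_iter.simps(2))
next
  case (Suc n)
  have L: "0 \<le> L" using lipschitz_on_nonneg[OF lip] .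
  have cf: "continuous_on UNIV f" using lipschitz_on_continuous_on[OF lip] .
  have cont: "continuous_on {0..t} (\<lambda>s. f (picard_iter f x0 m s))" for m
    by (rule continuous_on_compose2[OF cf continuous_on_picard_iter[OF cf]]) auto
  let ?c = "norm (f x0) * L ^ Suc n / fact (Suc (Suc n))"
  have primitive: "((\<lambda>s. norm (f x0) * L ^ Suc n * s ^ Suc n / fact (Suc n)) has_integral ?c * t ^ Suc (Suc n)) {0..t}"
  proof -
    have "((\<lambda>s. ?c * s ^ Suc (Suc n)) has_real_derivative ?c * (real (Suc (Suc n)) * s ^ Suc n))
            (at s within {0..t})" for s
      by (rule derivative_eq_intros refl)+ simp
    moreover have "?c * (real (Suc (Suc n)) * s ^ Suc n) = norm (f x0) * L ^ Suc n * s ^ Suc n / fact (Suc n)"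
      for s
      by (simp add: fact_Suc[of "Suc n"] del: fact_Suc)
    ultimately have "((\<lambda>s. ?c * s ^ Suc (Suc n)) has_vector_derivative
             norm (f x0) * L ^ Suc n * s ^ Suc n / fact (Suc n)) (at s within {0..t})" for s
      by (metis has_real_derivative_iff_has_vector_derivative)
    from fundamental_theorem_of_calculus[OF Suc.prems this] show ?thesis by simp
  qed
  have "picard_iter f x0 (Suc (Suc n)) t - picard_iter f x0 (Suc n) t
      = integral {0..t} (\<lambda>s. f (picard_iter f x0 (Suc n) s)) - integral {0..t} (\<lambda>s. f (picard_iter f x0 n s))"
    by (simp only: picard_iter.simps(2)[of f x0 "Suc n"] picard_iter.simps(2)[of f x0 n]) simp
  also have "\<dots> = integral {0..t} (\<lambda>s. f (picard_iter f x0 (Suc n) s) - f (picard_iter f x0 n s))"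
    by (intro integral_diff[symmetric] integrable_continuous_interval cont)
  also have "norm \<dots> \<le> integral {0..t} (\<lambda>s. norm (f x0) * L ^ Suc n * s ^ Suc n / fact (Suc n))"
  proof (rule integral_norm_bound_integral)
    fix s assume s: "s \<in> {0..t}"
    have "norm (f (picard_iter f x0 (Suc n) s) - f (picard_iter f x0 n s))
        \<le> L * norm (picard_iter f x0 (Suc n) s - picard_iter f x0 n s)"
      by (rule lipschitz_on_normD[OF lip]) auto
    also have "\<dots> \<le> L * (norm (f x0) * L ^ n * s ^ Suc n / fact (Suc n))"
      using Suc.IH[of s] s L by (intro mult_left_mono) auto
    finally show "norm (f (picard_iter f x0 (Suc n) s) - f (picard_iter f x0 n s))
        \<le> norm (f x0) * L ^ Suc n * s ^ Suc n / fact (Suc n)"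
      by (simp add: mult_ac)
  next
    show "(\<lambda>s. f (picard_iter f x0 (Suc n) s) - f (picard_iter f x0 n s)) integrable_on {0..t}"
      by (intro integrable_diff integrable_continuous_interval cont)
  qed (use primitive in blast)
  also have "\<dots> = norm (f x0) * L ^ Suc n * t ^ Suc (Suc n) / fact (Suc (Suc n))"
    using integral_unique[OF primitive] by simp
  finally show ?case .
qed

lemma picard_iter_uniform_limit:
  fixes f :: "'a::banach \<Rightarrow> 'a"
  assumes lip: "L-lipschitz_on UNIV f" and "0 \<le> T"
  shows "uniform_limit {0..T} (picard_iter f x0)
           (\<lambda>t. x0 + (\<Sum>i. picard_iter f x0 (Suc i) t - picard_iter f x0 i t)) sequentially"
proof -
  let ?D = "\<lambda>i t. picard_iter f x0 (Suc i) t - picard_iter f x0 i t"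
  have L: "0 \<le> L" using lipschitz_on_nonneg[OF lip] .
  have "uniform_limit {0..T} (\<lambda>n t. \<Sum>i<n. ?D i t) (\<lambda>t. \<Sum>i. ?D i t) sequentially"
  proof (rule Weierstrass_m_test)
    fix n t assume t: "t \<in> {0..T}"
    have "norm (?D n t) \<le> norm (f x0) * L ^ n * t ^ Suc n / fact (Suc n)"
      using t by (intro picard_iter_step_le[OF lip]) auto
    also have "\<dots> \<le> norm (f x0) * L ^ n * T ^ Suc n / fact n"
      using t L by (intro frac_le mult_left_mono power_mono) (auto simp: fact_mono)
    also have "\<dots> = norm (f x0) * T * (inverse (fact n) * (L * T) ^ n)"
      by (simp add: field_simps power_mult_distrib)
    finally show "norm (?D n t) \<le> norm (f x0) * T * (inverse (fact n) * (L * T) ^ n)" .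
  next
    show "summable (\<lambda>n. norm (f x0) * T * (inverse (fact n) * (L * T) ^ n))"
      by (intro summable_mult summable_exp)
  qed
  then have "uniform_limit {0..T} (\<lambda>n t. x0 + (\<Sum>i<n. ?D i t)) (\<lambda>t. x0 + (\<Sum>i. ?D i t)) sequentially"
    unfolding uniform_limit_iff by (simp add: dist_norm)
  moreover have "x0 + (\<Sum>i<n. ?D i t) = picard_iter f x0 n t" for n t
    using sum_lessThan_telescope[of "\<lambda>i. picard_iter f x0 i t" n] by simp
  ultimately show ?thesis by simp
qed

lemma lipschitz_ode_solution_exists:
  fixes f :: "'a::banach \<Rightarrow> 'a"
  assumes lip: "L-lipschitz_on UNIV f"
  shows "\<exists>y. y 0 = x0 \<and> (\<forall>t\<ge>0. (y has_vector_derivative f (y t)) (at t within {0..}))"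
proof -
  define y where "y t = x0 + (\<Sum>i. picard_iter f x0 (Suc i) t - picard_iter f x0 i t)" for t
  have lim: "uniform_limit {0..T} (picard_iter f x0) y sequentially" if "0 \<le> T" for T
    unfolding y_def using picard_iter_uniform_limit[OF lip that] .
  have cf: "continuous_on UNIV f" using lipschitz_on_continuous_on[OF lip] .
  have cont_fy: "continuous_on {0..T} (\<lambda>s. f (y s))" if "0 \<le> T" for T
    using uniform_limit_theorem[OF _ lim[OF that]] continuous_on_picard_iter[OF cf]
    by (intro continuous_on_compose2[OF cf]) auto
  have integral_eq: "y t = x0 + integral {0..t} (\<lambda>s. f (y s))" if t: "0 \<le> t" for t
  proof -
    have "uniform_limit {0..t} (\<lambda>n s. f (picard_iter f x0 n s)) (\<lambda>s. f (y s)) sequentially"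
      using lipschitz_on_uniformly_continuous[OF lip]
      by (intro uniform_limit_compose_uniformly_continuous_on[OF lim[OF t]]) auto
    then obtain I J where I: "\<And>n. ((\<lambda>s. f (picard_iter f x0 n s)) has_integral I n) {0..t}"
      and J: "((\<lambda>s. f (y s)) has_integral J) {0..t}" and IJ: "I \<longlonglongrightarrow> J"
      using continuous_on_compose2[OF cf continuous_on_picard_iter[OF cf]]
      by (rule uniform_limit_integral) auto
    have "(\<lambda>n. picard_iter f x0 (Suc n) t) \<longlonglongrightarrow> x0 + J"
      using IJ I[THEN integral_unique] by (simp add: picard_iter.simps(2) tendsto_add)
    moreover have "(\<lambda>n. picard_iter f x0 (Suc n) t) \<longlonglongrightarrow> y t"
      using LIMSEQ_Suc[OF tendsto_uniform_limitI[OF lim[OF t]]] t by auto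
    ultimately show ?thesis
      using J by (metis LIMSEQ_unique integral_unique)
  qed
  have "(y has_vector_derivative f (y t)) (at t within {0..})" if t: "0 \<le> t" for t
  proof -
    have "((\<lambda>u. x0 + integral {0..u} (\<lambda>s. f (y s))) has_vector_derivative f (y t)) (at t within {0..t+1})"
      using integral_has_vector_derivative[OF cont_fy, of "t + 1" t] t
      by (auto intro!: derivative_eq_intros)
    then have "(y has_vector_derivative f (y t)) (at t within {0..t+1})"
      by (rule has_vector_derivative_transform[rotated 2]) (use t integral_eq in auto)
    moreover have "at t within {0..t+1} = at t within {0..}"
      by (rule at_within_nhd[of _ "{..<t+1}"]) auto
    ultimately show ?thesis by simp
  qed
  moreover have "y 0 = x0" using integral_eq[of 0] by simp
  ultimately show ?thesis by blast
qed

section \<open>Bounded Lipschitz functions\<close>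

definition bounded_lipschitz_on :: "'a::metric_space set \<Rightarrow> ('a \<Rightarrow> real) \<Rightarrow> bool" where
  "bounded_lipschitz_on S f \<longleftrightarrow> bounded (f ` S) \<and> (\<exists>L. L-lipschitz_on S f)"

lemma bounded_lipschitz_onE:
  assumes "bounded_lipschitz_on S f"
  obtains B L where "0 \<le> B" "\<And>x. x \<in> S \<Longrightarrow> \<bar>f x\<bar> \<le> B" "L-lipschitz_on S f"
proof -
  obtain B where "\<forall>x\<in>S. \<bar>f x\<bar> \<le> B"
    using assms by (auto simp: bounded_lipschitz_on_def bounded_iff)
  moreover obtain L where "L-lipschitz_on S f"
    using assms by (auto simp: bounded_lipschitz_on_def)
  ultimately show thesis
    using that[of "max 0 B" L] by force
qed

lemma bounded_lipschitz_on_const: "bounded_lipschitz_on S (\<lambda>x. c)"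
  unfolding bounded_lipschitz_on_def bounded_iff by (auto intro: lipschitz_on_constant)

lemma bounded_lipschitz_on_fst:
  "bounded S \<Longrightarrow> bounded_lipschitz_on S (fst :: real \<times> 'b::metric_space \<Rightarrow> real)"
  unfolding bounded_lipschitz_on_def
  using dist_fst_le by (auto intro!: bounded_fst exI[of _ 1] lipschitz_onI)

lemma bounded_lipschitz_on_snd:
  "bounded S \<Longrightarrow> bounded_lipschitz_on S (snd :: 'b::metric_space \<times> real \<Rightarrow> real)"
  unfolding bounded_lipschitz_on_def
  using dist_snd_le by (auto intro!: bounded_snd exI[of _ 1] lipschitz_onI)

lemma bounded_lipschitz_on_add:
  assumes "bounded_lipschitz_on S f" "bounded_lipschitz_on S g"
  shows "bounded_lipschitz_on S (\<lambda>x. f x + g x)"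
proof -
  obtain Bf Lf Bg Lg where Bf: "\<And>x. x \<in> S \<Longrightarrow> \<bar>f x\<bar> \<le> Bf" and Lf: "Lf-lipschitz_on S f"
    and Bg: "\<And>x. x \<in> S \<Longrightarrow> \<bar>g x\<bar> \<le> Bg" and Lg: "Lg-lipschitz_on S g"
    using assms by (metis bounded_lipschitz_onE)
  have "\<forall>x\<in>S. \<bar>f x + g x\<bar> \<le> Bf + Bg"
    using Bf Bg by (smt (verit))
  moreover have "(Lf + Lg)-lipschitz_on S (\<lambda>x. f x + g x)"
    using Lf Lg by (rule lipschitz_on_add)
  ultimately show ?thesis
    unfolding bounded_lipschitz_on_def bounded_iff by auto
qed

lemma bounded_lipschitz_on_mult:
  assumes "bounded_lipschitz_on S f" "bounded_lipschitz_on S g"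
  shows "bounded_lipschitz_on S (\<lambda>x. f x * g x)"
proof -
  obtain Bf Lf Bg Lg where Bf: "0 \<le> Bf" "\<And>x. x \<in> S \<Longrightarrow> \<bar>f x\<bar> \<le> Bf" and Lf: "Lf-lipschitz_on S f"
    and Bg: "0 \<le> Bg" "\<And>x. x \<in> S \<Longrightarrow> \<bar>g x\<bar> \<le> Bg" and Lg: "Lg-lipschitz_on S g"
    using assms by (metis bounded_lipschitz_onE)
  have "(Bf * Lg + Bg * Lf)-lipschitz_on S (\<lambda>x. f x * g x)"
  proof (rule lipschitz_onI)
    fix x y assume xy: "x \<in> S" "y \<in> S"
    have "\<bar>f x * g x - f y * g y\<bar> \<le> \<bar>f x\<bar> * \<bar>g x - g y\<bar> + \<bar>g y\<bar> * \<bar>f x - f y\<bar>"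
    proof -
      have "f x * g x - f y * g y = f x * (g x - g y) + g y * (f x - f y)"
        by (simp add: algebra_simps)
      then show ?thesis by (metis abs_mult abs_triangle_ineq)
    qed
    also have "\<dots> \<le> Bf * (Lg * dist x y) + Bg * (Lf * dist x y)"
      using xy Bf Bg lipschitz_onD[OF Lf xy] lipschitz_onD[OF Lg xy]
      by (intro add_mono mult_mono) (auto simp: dist_real_def)
    finally show "dist (f x * g x) (f y * g y) \<le> (Bf * Lg + Bg * Lf) * dist x y"
      by (simp add: dist_real_def algebra_simps)
  qed (use Bf Bg lipschitz_on_nonneg[OF Lf] lipschitz_on_nonneg[OF Lg] in simp)
  moreover have "\<forall>x\<in>S. \<bar>f x * g x\<bar> \<le> Bf * Bg"
    using Bf Bg by (auto simp: abs_mult intro: mult_mono)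
  ultimately show ?thesis
    unfolding bounded_lipschitz_on_def bounded_iff by auto
qed

lemma bounded_lipschitz_on_inverse:
  assumes f: "bounded_lipschitz_on S f" and "0 < a" and ge: "\<And>x. x \<in> S \<Longrightarrow> a \<le> f x"
  shows "bounded_lipschitz_on S (\<lambda>x. 1 / f x)"
proof -
  obtain L where L: "L-lipschitz_on S f"
    using f by (auto simp: bounded_lipschitz_on_def)
  have "(L / a\<^sup>2)-lipschitz_on S (\<lambda>x. 1 / f x)"
  proof (rule lipschitz_onI)
    fix x y assume xy: "x \<in> S" "y \<in> S"
    have pos: "a \<le> f x" "a \<le> f y" using ge xy by auto
    have "\<bar>1 / f x - 1 / f y\<bar> = \<bar>f x - f y\<bar> / (f x * f y)"
      using pos \<open>0 < a\<close> by (simp add: field_simps abs_div)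
    also have "\<dots> \<le> \<bar>f x - f y\<bar> / a\<^sup>2"
      using pos \<open>0 < a\<close> by (auto intro!: divide_left_mono mult_mono simp: power2_eq_square)
    also have "\<dots> \<le> L * dist x y / a\<^sup>2"
      using lipschitz_onD[OF L xy] by (intro divide_right_mono) (auto simp: dist_real_def)
    finally show "dist (1 / f x) (1 / f y) \<le> L / a\<^sup>2 * dist x y"
      by (simp add: dist_real_def)
  qed (use lipschitz_on_nonneg[OF L] in simp)
  moreover have "\<forall>x\<in>S. \<bar>1 / f x\<bar> \<le> 1 / a"
    using ge \<open>0 < a\<close> by (auto intro!: frac_le order_trans[OF _ abs_ge_self])
  ultimately show ?thesis
    unfolding bounded_lipschitz_on_def bounded_iff by auto
qed

lemma bounded_lipschitz_on_minus:
  "bounded_lipschitz_on S f \<Longrightarrow> bounded_lipschitz_on S (\<lambda>x. - f x)"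
  using bounded_lipschitz_on_mult[OF bounded_lipschitz_on_const, of S f "-1"] by simp

lemma bounded_lipschitz_on_diff:
  "bounded_lipschitz_on S f \<Longrightarrow> bounded_lipschitz_on S g \<Longrightarrow> bounded_lipschitz_on S (\<lambda>x. f x - g x)"
  using bounded_lipschitz_on_add[of S f "\<lambda>x. - g x"] bounded_lipschitz_on_minus[of S g] by simp

lemma bounded_lipschitz_on_divide_const:
  "bounded_lipschitz_on S f \<Longrightarrow> bounded_lipschitz_on S (\<lambda>x. f x / c)"
  using bounded_lipschitz_on_mult[OF _ bounded_lipschitz_on_const, of S f "1 / c"] by simp

section \<open>Forward invariance and exponential decay\<close>

lemma has_vector_derivative_PairD:
  fixes y :: "real \<Rightarrow> real \<times> real"
  assumes "(y has_vector_derivative (a, b)) F"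
  shows "((\<lambda>t. fst (y t)) has_real_derivative a) F" and "((\<lambda>t. snd (y t)) has_real_derivative b) F"
  using has_derivative_fst[OF assms[unfolded has_vector_derivative_def]]
    has_derivative_snd[OF assms[unfolded has_vector_derivative_def]]
  by (simp_all add: has_field_derivative_def mult_commute_abs)

lemma closed_forward_invariant:
  fixes y :: "real \<Rightarrow> 'a::topological_space"
  assumes cont: "continuous_on {0..} y" and "closed K" and "y 0 \<in> K"
    and step: "\<And>t. 0 \<le> t \<Longrightarrow> y t \<in> K \<Longrightarrow> \<forall>\<^sub>F r in at_right t. y r \<in> K"
    and "0 \<le> t"
  shows "y t \<in> K"
proof (rule ccontr)
  assume "y t \<notin> K"
  define B where "B = {s. 0 \<le> s \<and> y s \<notin> K}"
  \<comment> \<open>The first exit time: \<open>y s0 \<in> K\<close> by closedness, and then \<open>step\<close> keeps \<open>y\<close> in \<open>K\<close> a little longer.\<close>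
  define s0 where "s0 = Inf B"
  have "t \<in> B" using \<open>0 \<le> t\<close> \<open>y t \<notin> K\<close> by (simp add: B_def)
  have bdd: "bdd_below B" by (auto simp: B_def bdd_below_def)
  have below: "y r \<in> K" if "0 \<le> r" "r < s0" for r
    using cInf_lower[OF _ bdd, of r] that by (force simp: B_def s0_def)
  have "0 \<le> s0"
    using \<open>t \<in> B\<close> by (auto simp: s0_def B_def intro!: cInf_greatest)
  have "y s0 \<in> K"
  proof (cases "s0 = 0")
    case True
    then show ?thesis using \<open>y 0 \<in> K\<close> by simp
  next
    case False
    then have "0 < s0" using \<open>0 \<le> s0\<close> by simp
    have "y ` closure {0..<s0} \<subseteq> K"
      using \<open>0 < s0\<close> below \<open>closed K\<close>
      by (intro image_closure_subset continuous_on_subset[OF cont]) auto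
    then show ?thesis using \<open>0 < s0\<close> by auto
  qed
  then obtain b where "s0 < b" and b: "\<And>r. s0 < r \<Longrightarrow> r < b \<Longrightarrow> y r \<in> K"
    using step[OF \<open>0 \<le> s0\<close>] by (auto simp: eventually_at_right_field)
  have "b \<le> s0"
    unfolding s0_def
  proof (rule cInf_greatest)
    show "B \<noteq> {}" using \<open>t \<in> B\<close> by blast
    fix s assume "s \<in> B"
    then have "s0 \<le> s" "y s \<notin> K"
      using cInf_lower[OF _ bdd] by (auto simp: s0_def B_def)
    then show "b \<le> s"
      using b \<open>y s0 \<in> K\<close> by (cases "s = s0") (auto simp: not_less[symmetric])
  qed
  with \<open>s0 < b\<close> show False by simp
qed

lemma eventually_neg_at_right_barrier:
  fixes g :: "real \<Rightarrow> real"
  assumes deriv: "(g has_real_derivative D) (at_right t)"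
    and "g t \<le> 0" and "g t = 0 \<Longrightarrow> D < 0"
  shows "\<forall>\<^sub>F r in at_right t. g r < 0"
proof (cases "g t = 0")
  case True
  obtain d where "0 < d" and d: "\<And>h. 0 < h \<Longrightarrow> h < d \<Longrightarrow> g (t + h) < g t"
    using has_real_derivative_neg_dec_right[OF deriv \<open>g t = 0 \<Longrightarrow> D < 0\<close>[OF True]] by auto
  show ?thesis
    unfolding eventually_at_right_field
    using d[of "_ - t"] True \<open>0 < d\<close> by (intro exI[of _ "t + d"]) force
next
  case False
  then have "g t < 0" using \<open>g t \<le> 0\<close> by simp
  moreover have "(g \<longlongrightarrow> g t) (at_right t)"
    using DERIV_continuous[OF deriv] by (simp add: continuous_within)
  ultimately show ?thesis using order_tendstoD(2) by blast
qed

lemma tendsto_zero_of_deriv_rate_le: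
  fixes p g :: "real \<Rightarrow> real"
  assumes "0 < m"
    and deriv: "\<And>t. 0 \<le> t \<Longrightarrow> (p has_real_derivative p t * g t) (at t within {0..})"
    and rate: "\<And>t. 0 \<le> t \<Longrightarrow> g t \<le> - m"
  shows "(p \<longlongrightarrow> 0) at_top"
proof -
  define h where "h t = (p t)\<^sup>2 * exp (2 * m * t)" for t
  have dh: "(h has_real_derivative 2 * (p t)\<^sup>2 * exp (2 * m * t) * (g t + m)) (at t within {0..})"
    if "0 \<le> t" for t
    unfolding h_def
    by (rule derivative_eq_intros deriv[OF that] refl)+ (simp add: algebra_simps power2_eq_square)
  have h_le: "h t \<le> h 0" if "0 \<le> t" for t
  proof (rule DERIV_nonpos_imp_decreasing_open[OF that])
    fix x assume x: "0 < x" "x < t"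
    then have "(h has_real_derivative 2 * (p x)\<^sup>2 * exp (2 * m * x) * (g x + m)) (at x)"
      using dh[of x] at_within_interior[of x "{0..}"] by simp
    moreover have "2 * (p x)\<^sup>2 * exp (2 * m * x) * (g x + m) \<le> 0"
      using rate[of x] x by (intro mult_nonneg_nonpos) auto
    ultimately show "\<exists>y. (h has_real_derivative y) (at x) \<and> y \<le> 0" by blast
  next
    show "continuous_on {0..t} h"
      using DERIV_continuous[OF dh] continuous_within_subset[of _ "{0..}" h "{0..t}"]
      by (auto simp: continuous_on_eq_continuous_within)
  qed
  have bound: "(p t)\<^sup>2 \<le> (p 0)\<^sup>2 * exp (- (2 * m) * t)" if "0 \<le> t" for t
  proof -
    have "(p t)\<^sup>2 = h t * exp (- (2 * m) * t)"
      by (simp add: h_def mult.assoc exp_add[symmetric])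
    also have "\<dots> \<le> (p 0)\<^sup>2 * exp (- (2 * m) * t)"
      using h_le[OF that] by (simp add: h_def)
    finally show ?thesis .
  qed
  have lim: "((\<lambda>t. (p 0)\<^sup>2 * exp (- (2 * m) * t)) \<longlongrightarrow> 0) at_top"
    using \<open>0 < m\<close> by real_asymp
  have ev: "\<forall>\<^sub>F t in at_top. (p t)\<^sup>2 \<le> (p 0)\<^sup>2 * exp (- (2 * m) * t)"
    using eventually_ge_at_top[of 0] by eventually_elim (rule bound)
  have "((\<lambda>t. (p t)\<^sup>2) \<longlongrightarrow> 0) at_top"
    by (rule tendsto_sandwich[OF _ ev tendsto_const lim]) simp
  then show ?thesis
    using tendsto_real_sqrt[of "\<lambda>t. (p t)\<^sup>2" 0 at_top] by (simp add: tendsto_rabs_zero_iff)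
qed

section \<open>The pole dynamics\<close>

definition rhs_v :: "real \<Rightarrow> real \<Rightarrow> real" where
  "rhs_v v p = - p / 4 * (1 + v\<^sup>2) + (1 - v\<^sup>2) / 2"

definition rhs_p :: "real \<Rightarrow> real \<Rightarrow> real" where
  "rhs_p v p = p * (p * Rf v - Qf v)"

definition rhs :: "real \<times> real \<Rightarrow> real \<times> real" where
  "rhs = (\<lambda>(v, p). (rhs_v v p, rhs_p v p))"

lemma lipschitz_on_rhs:
  assumes "bounded S" and "0 < a" and "\<And>x. x \<in> S \<Longrightarrow> a \<le> fst x"
  shows "\<exists>L. L-lipschitz_on S rhs"
proof -
  note intros = bounded_lipschitz_on_const
    bounded_lipschitz_on_fst[OF \<open>bounded S\<close>] bounded_lipschitz_on_snd[OF \<open>bounded S\<close>]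
    bounded_lipschitz_on_add bounded_lipschitz_on_diff bounded_lipschitz_on_minus
    bounded_lipschitz_on_mult bounded_lipschitz_on_divide_const
    bounded_lipschitz_on_inverse[OF _ \<open>0 < a\<close> assms(3)]
  have "bounded_lipschitz_on S (\<lambda>x. rhs_v (fst x) (snd x))"
    unfolding rhs_v_def power2_eq_square by (intro intros)
  moreover have "bounded_lipschitz_on S (\<lambda>x. rhs_p (fst x) (snd x))"
    unfolding rhs_p_def Rf_def Qf_def by (intro intros)
  ultimately obtain L M where "L-lipschitz_on S (\<lambda>x. rhs_v (fst x) (snd x))"
    "M-lipschitz_on S (\<lambda>x. rhs_p (fst x) (snd x))"
    by (auto simp: bounded_lipschitz_on_def)
  from lipschitz_on_Pair[OF this] show ?thesis
    by (auto simp: rhs_def case_prod_beta)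
qed

lemma c1_bound_quadratic_neg:
  fixes c :: real
  assumes "0 < c" "c < (3 + sqrt 73) / 8"
  shows "4 * c\<^sup>2 - 3 * c - 4 < 0"
proof (cases "8*c - 3 \<ge> 0")
  case True
  have "8*c - 3 < sqrt 73" using assms by simp
  then have "(8*c - 3)^2 < (sqrt 73)^2" using True by (intro power_strict_mono) auto
  then have "(8*c - 3)^2 < 73" by simp
  then show ?thesis by (simp add: power2_eq_square algebra_simps)
next
  case False
  then have "c < 3/8" by simp
  then have "c * c < 1 * 1" using assms by (intro mult_strict_mono) auto
  then show ?thesis using assms by (simp add: power2_eq_square)
qed

lemma upper_boundary_quartic_neg:
  fixes c w :: real
  assumes c: "0 < c" "4 * c\<^sup>2 - 3 * c - 4 < 0" and "0 \<le> w"
  shows "(2*c - 4) + (2*c\<^sup>2 + 4*c - 8) * w + (4*c\<^sup>2 - 3*c - 4) * w\<^sup>2 - (3*c + c\<^sup>2) * w^3 - c\<^sup>2 * w^4 < 0"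
proof -
  have "c < 3/2"
  proof (rule ccontr)
    assume "\<not> c < 3/2"
    then have "3/2 * 3 \<le> c * (4*c - 3)" by (intro mult_mono) auto
    with c show False by (simp add: power2_eq_square algebra_simps)
  qed
  define A where "A = 2*c\<^sup>2 + 4*c - 8"
  have quadratic: "(4*c\<^sup>2 - 3*c - 4) * w\<^sup>2 \<le> 0"
    using c by (intro mult_nonpos_nonneg) auto
  have cubic: "0 \<le> (3*c + c\<^sup>2) * w^3" and quartic: "0 \<le> c\<^sup>2 * w^4"
    using c \<open>0 \<le> w\<close> by auto
  show ?thesis
  proof (cases "A \<le> 0")
    case True
    then have "A * w \<le> 0" using \<open>0 \<le> w\<close> by (simp add: mult_nonpos_nonneg)
    then show ?thesis using quadratic cubic quartic \<open>c < 3/2\<close> unfolding A_def by linarith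
  next
    case False
    have "7/8 < c"
    proof (rule ccontr)
      assume "\<not> 7/8 < c"
      then have "c\<^sup>2 \<le> (7/8)\<^sup>2" using c by (intro power_mono) auto
      with False \<open>\<not> 7/8 < c\<close> show False unfolding A_def by (simp add: power2_eq_square)
    qed
    have "c\<^sup>2 < (3/2)\<^sup>2" using c \<open>c < 3/2\<close> by (intro power_strict_mono) auto
    then have "A * w \<le> 5/2 * w"
      using \<open>c < 3/2\<close> \<open>0 \<le> w\<close> by (intro mult_right_mono) (auto simp: A_def power2_eq_square)
    moreover have "24/5 * w^3 \<le> (3*c + c\<^sup>2) * w^3"
      using False \<open>7/8 < c\<close> \<open>0 \<le> w\<close> by (intro mult_right_mono) (auto simp: A_def)
    \<comment> \<open>The cubic term absorbs the linear one: \<open>(w - 21/50)\<^sup>2 (w + 21/25) \<ge> 0\<close>.\<close>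
    moreover have "0 \<le> (w - 21/50)\<^sup>2 * (w + 21/25)" using \<open>0 \<le> w\<close> by simp
    moreover have "(w - 21/50)\<^sup>2 * (w + 21/25) = w^3 - 1323/2500 * w + 9261/62500"
      by (simp add: power2_eq_square power3_eq_cube field_simps)
    ultimately show ?thesis using quadratic quartic \<open>c < 3/2\<close> \<open>0 \<le> w\<close> unfolding A_def by linarith
  qed
qed

lemma upper_boundary_inward:
  fixes c v p :: real
  assumes c: "0 < c" "4 * c\<^sup>2 - 3 * c - 4 < 0" and "1 \<le> v" and p: "p = 1 + c * (v - 1)"
  shows "rhs_p v p - c * rhs_v v p < 0"
proof -
  define w where "w = v - 1"
  have "0 \<le> w" and v: "v = 1 + w" using \<open>1 \<le> v\<close> by (auto simp: w_def)
  have "rhs_p v p - c * rhs_v v p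
      = (2 * p\<^sup>2 * (1 - v\<^sup>2) - 2 * p * (1 + v\<^sup>2) + c * v * p * (1 + v\<^sup>2) - 2 * c * v * (1 - v\<^sup>2)) / (4 * v)"
    unfolding rhs_p_def rhs_v_def Rf_def Qf_def using \<open>1 \<le> v\<close> by (simp add: field_simps power2_eq_square)
  also have "2 * p\<^sup>2 * (1 - v\<^sup>2) - 2 * p * (1 + v\<^sup>2) + c * v * p * (1 + v\<^sup>2) - 2 * c * v * (1 - v\<^sup>2)
      = (2*c - 4) + (2*c\<^sup>2 + 4*c - 8) * w + (4*c\<^sup>2 - 3*c - 4) * w\<^sup>2 - (3*c + c\<^sup>2) * w^3 - c\<^sup>2 * w^4"
    unfolding p v by (simp add: algebra_simps power2_eq_square power3_eq_cube power4_eq_xxxx)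
  finally show ?thesis
    using upper_boundary_quartic_neg[OF c \<open>0 \<le> w\<close>] \<open>1 \<le> v\<close> by (simp add: divide_neg_pos)
qed

lemma lower_boundary_inward:
  fixes c v p :: real
  assumes c: "0 < c" "4 * c\<^sup>2 - 3 * c - 4 < 0" and "0 < v" "v \<le> 1" and p: "p = -1 - c * (1 / v - 1)"
  shows "rhs_p v p - c * rhs_v v p / v\<^sup>2 > 0"
proof -
  have "rhs_p (1 / v) (- p) - c * rhs_v (1 / v) (- p) < 0"
    using \<open>0 < v\<close> \<open>v \<le> 1\<close> p by (intro upper_boundary_inward[OF c]) (auto simp: field_simps)
  moreover have "rhs_p (1 / v) (- p) - c * rhs_v (1 / v) (- p) = - (rhs_p v p - c * rhs_v v p / v\<^sup>2)"
    unfolding rhs_p_def rhs_v_def Rf_def Qf_def using \<open>0 < v\<close> by (simp add: field_simps power2_eq_square)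
  ultimately show ?thesis by simp
qed

lemma rhs_v_eq: "rhs_v v p = (2 - 2 * v\<^sup>2 - p * (1 + v\<^sup>2)) / 4"
  by (simp add: rhs_v_def field_simps)

lemma rhs_v_pos:
  assumes "0 < v" "v \<le> 1/2" "p \<le> 1"
  shows "0 < rhs_v v p"
proof -
  have "p * (1 + v\<^sup>2) \<le> 1 + v\<^sup>2" using mult_right_mono[OF \<open>p \<le> 1\<close>, of "1 + v\<^sup>2"] by simp
  moreover have "v\<^sup>2 \<le> (1/2)\<^sup>2" using assms by (intro power_mono) auto
  ultimately show ?thesis unfolding rhs_v_eq by (simp add: power2_eq_square)
qed

lemma rhs_v_neg:
  assumes "2 \<le> v" "-1 \<le> p"
  shows "rhs_v v p < 0"
proof -
  have "- (1 + v\<^sup>2) \<le> p * (1 + v\<^sup>2)" using mult_right_mono[OF \<open>-1 \<le> p\<close>, of "1 + v\<^sup>2"] by simp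
  moreover have "2\<^sup>2 \<le> v\<^sup>2" using assms by (intro power_mono) auto
  ultimately show ?thesis unfolding rhs_v_eq by (simp add: power2_eq_square)
qed

lemma p1_eq_max: "p1 c v = 1 + c * max 0 (v - 1)"
  by (simp add: p1_def heaviside_def max_def)

lemma p2_eq_max: "0 < v \<Longrightarrow> p2 c v = -1 - c * max 0 (1 / v - 1)"
  by (simp add: p2_def heaviside_def max_def)

definition Omega_band :: "real \<Rightarrow> real \<Rightarrow> real \<Rightarrow> (real \<times> real) set" where
  "Omega_band c vlo vhi = {(v, p). vlo \<le> v \<and> v \<le> vhi \<and> p2 c v \<le> p \<and> p \<le> p1 c v}"

lemma Omega_band_subset_Omega: "0 < vlo \<Longrightarrow> Omega_band c vlo vhi \<subseteq> Omega c"
  by (auto simp: Omega_band_def Omega_def)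

lemma Omega_band_subset_cbox:
  assumes "0 < vlo" and "0 \<le> c"
  shows "Omega_band c vlo vhi \<subseteq> cbox (vlo, p2 c vlo) (vhi, p1 c vhi)"
proof
  fix x assume "x \<in> Omega_band c vlo vhi"
  then obtain v p where x: "x = (v, p)" and
    v: "vlo \<le> v" "v \<le> vhi" and p: "p2 c v \<le> p" "p \<le> p1 c v"
    by (auto simp: Omega_band_def)
  have "p1 c v \<le> p1 c vhi"
    using v \<open>0 \<le> c\<close> by (auto simp: p1_eq_max intro!: mult_left_mono)
  moreover have "p2 c vlo \<le> p2 c v"
  proof -
    have "1 / v \<le> 1 / vlo" using v \<open>0 < vlo\<close> by (simp add: frac_le)
    then show ?thesis
      using v \<open>0 < vlo\<close> \<open>0 \<le> c\<close> by (auto simp: p2_eq_max intro!: mult_left_mono)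
  qed
  ultimately show "x \<in> cbox (vlo, p2 c vlo) (vhi, p1 c vhi)"
    using x v p by (simp add: cbox_Pair_eq)
qed

lemma closed_Omega_band:
  assumes "0 < vlo"
  shows "closed (Omega_band c vlo vhi)"
proof -
  let ?S = "{x. vlo \<le> fst x}"
  have "continuous_on ?S (\<lambda>x. snd x - p2 c (fst x))"
  proof (rule continuous_on_cong[THEN iffD1, OF refl])
    show "continuous_on ?S (\<lambda>x. snd x + 1 + c * max 0 (1 / fst x - 1))"
      using \<open>0 < vlo\<close> by (intro continuous_intros) auto
  qed (use \<open>0 < vlo\<close> in \<open>simp add: p2_eq_max\<close>)
  then have "closed (?S \<inter> (\<lambda>x. snd x - p2 c (fst x)) -` {0..})"
    by (rule continuous_closed_preimage) (auto intro!: closed_Collect_le continuous_intros)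
  moreover have "closed {x. fst x \<le> vhi \<and> snd x \<le> 1 + c * max 0 (fst x - 1)}"
    by (intro closed_Collect_conj closed_Collect_le continuous_intros)
  moreover have "Omega_band c vlo vhi
      = (?S \<inter> (\<lambda>x. snd x - p2 c (fst x)) -` {0..}) \<inter> {x. fst x \<le> vhi \<and> snd x \<le> 1 + c * max 0 (fst x - 1)}"
    by (auto simp: Omega_band_def p1_eq_max)
  ultimately show ?thesis by (simp add: closed_Int)
qed

lemma Omega_band_rate_le:
  assumes "(v, p) \<in> Omega_band c vlo vhi" and "0 < vlo"
  shows "p * Rf v - Qf v \<le> - min vlo (1 / vhi)"
proof -
  have v: "vlo \<le> v" "v \<le> vhi" and p: "p2 c v \<le> p" "p \<le> p1 c v"
    using assms(1) by (auto simp: Omega_band_def)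
  have "0 < v" using v \<open>0 < vlo\<close> by simp
  have rate: "p * Rf v - Qf v = (p * (1 - v\<^sup>2) - (1 + v\<^sup>2)) / (2 * v)"
    unfolding Rf_def Qf_def using \<open>0 < v\<close> by (simp add: field_simps power2_eq_square)
  show ?thesis
  proof (cases "v \<le> 1")
    case True
    then have "p \<le> 1" "v\<^sup>2 \<le> 1" using p \<open>0 < v\<close> by (auto simp: p1_eq_max power_le_one)
    then have "p * (1 - v\<^sup>2) - (1 + v\<^sup>2) \<le> - v * (2 * v)"
      using mult_right_mono[of p 1 "1 - v\<^sup>2"] by (simp add: power2_eq_square)
    then have "p * Rf v - Qf v \<le> - v"
      unfolding rate using \<open>0 < v\<close> by (simp add: divide_le_eq)
    then show ?thesis using v by linarith
  next
    case False
    then have "-1 \<le> p" "1 \<le> v\<^sup>2" using p \<open>0 < v\<close> by (auto simp: p2_eq_max one_le_power)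
    then have "p * (1 - v\<^sup>2) - (1 + v\<^sup>2) \<le> - (1 / v) * (2 * v)"
      using mult_right_mono_neg[of "-1" p "1 - v\<^sup>2"] \<open>0 < v\<close> by simp
    then have "p * Rf v - Qf v \<le> - (1 / v)"
      unfolding rate using \<open>0 < v\<close> by (simp add: divide_le_eq)
    moreover have "1 / vhi \<le> 1 / v" using v \<open>0 < v\<close> by (simp add: frac_le)
    ultimately show ?thesis by linarith
  qed
qed

lemma Omega_band_tendsto_zero:
  assumes "0 < vlo" and band: "\<And>t. 0 \<le> t \<Longrightarrow> (v t, p t) \<in> Omega_band c vlo vhi"
    and dp: "\<And>t. 0 \<le> t \<Longrightarrow> (p has_real_derivative rhs_p (v t) (p t)) (at t within {0..})"
  shows "(p \<longlongrightarrow> 0) at_top"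
proof (rule tendsto_zero_of_deriv_rate_le)
  have "vlo \<le> vhi" using band[of 0] by (simp add: Omega_band_def)
  then show "0 < min vlo (1 / vhi)" using \<open>0 < vlo\<close> by simp
  show "(p has_real_derivative p t * (p t * Rf (v t) - Qf (v t))) (at t within {0..})" if "0 \<le> t" for t
    using dp[OF that] by (simp add: rhs_p_def)
  show "p t * Rf (v t) - Qf (v t) \<le> - min vlo (1 / vhi)" if "0 \<le> t" for t
    using Omega_band_rate_le[OF band[OF that] \<open>0 < vlo\<close>] .
qed

lemma eventually_le_p1:
  assumes c: "0 < c" "4 * c\<^sup>2 - 3 * c - 4 < 0"
    and dv: "(v has_real_derivative rhs_v (v t) (p t)) (at_right t)"
    and dp: "(p has_real_derivative rhs_p (v t) (p t)) (at_right t)"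
    and "0 < v t" and "p t \<le> p1 c (v t)"
  shows "\<forall>\<^sub>F r in at_right t. p r \<le> p1 c (v r)"
proof (cases "p t \<le> 1")
  case True
  have "rhs_p (v t) 1 < 0"
    using \<open>0 < v t\<close> by (simp add: rhs_p_def Rf_def Qf_def field_simps)
  with True have "\<forall>\<^sub>F r in at_right t. p r - 1 < 0"
    by (intro eventually_neg_at_right_barrier[where D = "rhs_p (v t) (p t)"])
      (auto intro!: derivative_eq_intros dp)
  then show ?thesis
    by eventually_elim (smt (verit) c(1) max.cobounded1 mult_nonneg_nonneg p1_eq_max)
next
  case False
  with \<open>p t \<le> p1 c (v t)\<close> c have "1 \<le> v t" and on_line: "p t \<le> 1 + c * (v t - 1)"
    by (auto simp: p1_eq_max max_def split: if_splits)
  have "\<forall>\<^sub>F r in at_right t. p r - (1 + c * (v r - 1)) < 0"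
  proof (rule eventually_neg_at_right_barrier)
    show "((\<lambda>r. p r - (1 + c * (v r - 1))) has_real_derivative
        rhs_p (v t) (p t) - c * rhs_v (v t) (p t)) (at_right t)"
      by (auto intro!: derivative_eq_intros dv dp)
    show "rhs_p (v t) (p t) - c * rhs_v (v t) (p t) < 0" if "p t - (1 + c * (v t - 1)) = 0"
      using that by (intro upper_boundary_inward[OF c \<open>1 \<le> v t\<close>]) simp
  qed (use on_line in simp)
  then show ?thesis
    by eventually_elim (smt (verit) c(1) max.cobounded2 mult_left_mono p1_eq_max)
qed

lemma eventually_ge_p2:
  assumes c: "0 < c" "4 * c\<^sup>2 - 3 * c - 4 < 0"
    and dv: "(v has_real_derivative rhs_v (v t) (p t)) (at_right t)"
    and dp: "(p has_real_derivative rhs_p (v t) (p t)) (at_right t)"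
    and "0 < v t" and "p2 c (v t) \<le> p t"
  shows "\<forall>\<^sub>F r in at_right t. p2 c (v r) \<le> p r"
proof -
  have "\<forall>\<^sub>F r in at_right t. 0 < v r"
    using order_tendstoD(1)[OF DERIV_continuous[OF dv, unfolded continuous_within] \<open>0 < v t\<close>] .
  moreover have "\<forall>\<^sub>F r in at_right t. - 1 - c * max 0 (1 / v r - 1) \<le> p r"
  proof (cases "-1 \<le> p t")
    case True
    have "0 < rhs_p (v t) (-1)"
      using \<open>0 < v t\<close> by (simp add: rhs_p_def Rf_def Qf_def field_simps)
    with True have "\<forall>\<^sub>F r in at_right t. - 1 - p r < 0"
      by (intro eventually_neg_at_right_barrier[where D = "- rhs_p (v t) (p t)"])
        (auto intro!: derivative_eq_intros dp)
    then show ?thesis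
      by eventually_elim (smt (verit) c(1) max.cobounded1 mult_nonneg_nonneg)
  next
    case False
    with \<open>p2 c (v t) \<le> p t\<close> c \<open>0 < v t\<close>
    have "1 \<le> 1 / v t" and on_line: "- 1 - c * (1 / v t - 1) \<le> p t"
      by (auto simp: p2_eq_max max_def split: if_splits)
    then have "v t \<le> 1" using \<open>0 < v t\<close> by (simp add: field_simps)
    have "\<forall>\<^sub>F r in at_right t. - 1 - c * (1 / v r - 1) - p r < 0"
    proof (rule eventually_neg_at_right_barrier)
      show "((\<lambda>r. - 1 - c * (1 / v r - 1) - p r) has_real_derivative
          c * rhs_v (v t) (p t) / (v t)\<^sup>2 - rhs_p (v t) (p t)) (at_right t)"
        using \<open>0 < v t\<close> by (auto intro!: derivative_eq_intros dv dp simp: power2_eq_square)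
      show "c * rhs_v (v t) (p t) / (v t)\<^sup>2 - rhs_p (v t) (p t) < 0"
        if "- 1 - c * (1 / v t - 1) - p t = 0"
        using lower_boundary_inward[OF c \<open>0 < v t\<close> \<open>v t \<le> 1\<close>, of "p t"] that by simp
    qed (use on_line in simp)
    then show ?thesis
      by eventually_elim (smt (verit) c(1) max.cobounded2 mult_left_mono)
  qed
  ultimately show ?thesis
    by eventually_elim (simp add: p2_eq_max)
qed

lemma eventually_in_Omega_band:
  assumes c: "0 < c" "4 * c\<^sup>2 - 3 * c - 4 < 0"
    and "0 < vlo" "vlo \<le> 1/2" "2 \<le> vhi"
    and dv: "(v has_real_derivative rhs_v (v t) (p t)) (at_right t)"
    and dp: "(p has_real_derivative rhs_p (v t) (p t)) (at_right t)"
    and band: "(v t, p t) \<in> Omega_band c vlo vhi"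
  shows "\<forall>\<^sub>F r in at_right t. (v r, p r) \<in> Omega_band c vlo vhi"
proof -
  have v: "vlo \<le> v t" "v t \<le> vhi" and p: "p2 c (v t) \<le> p t" "p t \<le> p1 c (v t)"
    using band by (auto simp: Omega_band_def)
  have "0 < v t" using v \<open>0 < vlo\<close> by simp
  have "\<forall>\<^sub>F r in at_right t. vlo - v r < 0"
  proof (rule eventually_neg_at_right_barrier)
    show "((\<lambda>r. vlo - v r) has_real_derivative - rhs_v (v t) (p t)) (at_right t)"
      by (auto intro!: derivative_eq_intros dv)
    show "- rhs_v (v t) (p t) < 0" if "vlo - v t = 0"
      using that p \<open>0 < vlo\<close> \<open>vlo \<le> 1/2\<close> by (intro rhs_v_pos neg_less_0_iff_less[THEN iffD2]) (auto simp: p1_eq_max)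
  qed (use v in simp)
  moreover have "\<forall>\<^sub>F r in at_right t. v r - vhi < 0"
  proof (rule eventually_neg_at_right_barrier)
    show "((\<lambda>r. v r - vhi) has_real_derivative rhs_v (v t) (p t)) (at_right t)"
      by (auto intro!: derivative_eq_intros dv)
    show "rhs_v (v t) (p t) < 0" if "v t - vhi = 0"
      using that p \<open>2 \<le> vhi\<close> \<open>0 < v t\<close> by (intro rhs_v_neg) (auto simp: p2_eq_max)
  qed (use v in simp)
  moreover have "\<forall>\<^sub>F r in at_right t. p r \<le> p1 c (v r)"
    using c dv dp \<open>0 < v t\<close> p(2) by (rule eventually_le_p1)
  moreover have "\<forall>\<^sub>F r in at_right t. p2 c (v r) \<le> p r"
    using c dv dp \<open>0 < v t\<close> p(1) by (rule eventually_ge_p2)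
  ultimately show ?thesis
    by eventually_elim (simp add: Omega_band_def)
qed

lemma Omega_band_forward_invariant:
  fixes y :: "real \<Rightarrow> real \<times> real"
  assumes c: "0 < c" "4 * c\<^sup>2 - 3 * c - 4 < 0"
    and lo: "0 < vlo" "vlo \<le> 1/2" and hi: "2 \<le> vhi"
    and cont: "continuous_on {0..} y"
    and deriv: "\<And>t. 0 \<le> t \<Longrightarrow> y t \<in> Omega_band c vlo vhi \<Longrightarrow>
                   (y has_vector_derivative rhs (y t)) (at t within {0..})"
    and "y 0 \<in> Omega_band c vlo vhi" and "0 \<le> t"
  shows "y t \<in> Omega_band c vlo vhi"
proof (rule closed_forward_invariant[OF cont closed_Omega_band[OF lo(1)] \<open>y 0 \<in> _\<close> _ \<open>0 \<le> t\<close>])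
  fix s assume "0 \<le> s" and band: "y s \<in> Omega_band c vlo vhi"
  have "(y has_vector_derivative (rhs_v (fst (y s)) (snd (y s)), rhs_p (fst (y s)) (snd (y s)))) (at_right s)"
    using has_vector_derivative_within_subset[OF deriv[OF \<open>0 \<le> s\<close> band], of "{s<..}"] \<open>0 \<le> s\<close>
    by (simp add: rhs_def case_prod_beta subset_eq)
  from eventually_in_Omega_band[OF c lo hi has_vector_derivative_PairD[OF this]] band
  show "\<forall>\<^sub>F r in at_right s. y r \<in> Omega_band c vlo vhi"
    by simp
qed

lemma Omega_band_solution_exists:
  assumes c: "0 < c" "4 * c\<^sup>2 - 3 * c - 4 < 0"
    and lo: "0 < vlo" "vlo \<le> 1/2" and hi: "2 \<le> vhi"
    and "x0 \<in> Omega_band c vlo vhi"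
  shows "\<exists>y. y 0 = x0 \<and> (\<forall>t\<ge>0. y t \<in> Omega_band c vlo vhi \<and>
                                  (y has_vector_derivative rhs (y t)) (at t within {0..}))"
proof -
  define a b where "a = (vlo, p2 c vlo)" and "b = (vhi, p1 c vhi)"
  have box: "Omega_band c vlo vhi \<subseteq> cbox a b"
    unfolding a_def b_def using Omega_band_subset_cbox[OF lo(1)] c by simp
  have "\<exists>L. L-lipschitz_on (cbox a b) rhs"
    by (rule lipschitz_on_rhs[OF bounded_cbox lo(1)]) (auto simp: a_def b_def cbox_Pair_eq)
  then obtain L where "L-lipschitz_on (cbox a b) rhs" ..
  moreover have "1-lipschitz_on UNIV (clamp a b)"
    by (intro lipschitz_onI) (simp_all add: dist_clamps_le_dist_args)
  moreover have "clamp a b ` UNIV \<subseteq> cbox a b"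
  proof -
    have "cbox a b \<noteq> {}" using box \<open>x0 \<in> _\<close> by auto
    then show ?thesis unfolding box_ne_empty(1) by auto
  qed
  ultimately have "(L * 1)-lipschitz_on UNIV (\<lambda>x. rhs (clamp a b x))"
    by (intro lipschitz_on_compose2) (auto intro: lipschitz_on_subset)
  then obtain y where "y 0 = x0"
    and y: "\<And>t. 0 \<le> t \<Longrightarrow> (y has_vector_derivative rhs (clamp a b (y t))) (at t within {0..})"
    using lipschitz_ode_solution_exists by blast
  have "continuous_on {0..} y"
    using y by (auto simp: continuous_on_eq_continuous_within intro: has_vector_derivative_continuous)
  moreover have "(y has_vector_derivative rhs (y t)) (at t within {0..})"
    if "0 \<le> t" "y t \<in> Omega_band c vlo vhi" for t
    using y[OF that(1)] box that(2) by auto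
  ultimately have "y t \<in> Omega_band c vlo vhi" if "0 \<le> t" for t
    using Omega_band_forward_invariant[OF c lo hi] \<open>y 0 = x0\<close> \<open>x0 \<in> _\<close> that by blast
  with \<open>y 0 = x0\<close> y box show ?thesis
    by (intro exI[of _ y]) (auto simp: subset_eq)
qed

theorem theorem3p8:
  fixes c1 v0 p0 :: real
  assumes "0 < c1" and "c1 < (3 + sqrt 73) / 8"
    and "(v0, p0) \<in> Omega c1"
  shows "\<exists>v p :: real \<Rightarrow> real.
     v 0 = v0 \<and> p 0 = p0 \<and>
     (\<forall>t\<ge>0. v t > 0) \<and>
     (\<forall>t\<ge>0. (p has_real_derivative (p t * (p t * Rf (v t) - Qf (v t)))) (at t within {0..})) \<and>
     (\<forall>t\<ge>0. (v has_real_derivative (- p t / 4 * (1 + (v t)\<^sup>2) + (1 - (v t)\<^sup>2) / 2)) (at t within {0..})) \<and>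
     (\<forall>t\<ge>0. (v t, p t) \<in> Omega c1) \<and>
     (\<exists>a b. 0 < a \<and> (\<forall>t\<ge>0. a \<le> v t \<and> v t \<le> b)) \<and>
     (p \<longlongrightarrow> 0) at_top"
proof -
  have c: "0 < c1" "4 * c1\<^sup>2 - 3 * c1 - 4 < 0"
    using assms(1) c1_bound_quadratic_neg[OF assms(1,2)] by auto
  define vlo vhi where "vlo = min v0 (1/2)" and "vhi = max v0 2"
  have "0 < v0" using assms(3) by (simp add: Omega_def)
  then have lo: "0 < vlo" "vlo \<le> 1/2" and hi: "2 \<le> vhi" by (auto simp: vlo_def vhi_def)
  have "(v0, p0) \<in> Omega_band c1 vlo vhi"
    using assms(3) by (auto simp: Omega_def Omega_band_def vlo_def vhi_def)
  then obtain y where "y 0 = (v0, p0)" and y: "\<And>t. 0 \<le> t \<Longrightarrow> y t \<in> Omega_band c1 vlo vhi \<and>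
      (y has_vector_derivative rhs (y t)) (at t within {0..})"
    using Omega_band_solution_exists[OF c lo hi] by blast
  define v p where "v = (\<lambda>t. fst (y t))" and "p = (\<lambda>t. snd (y t))"
  have band: "(v t, p t) \<in> Omega_band c1 vlo vhi" if "0 \<le> t" for t
    using y[OF that] by (simp add: v_def p_def)
  have dv: "(v has_real_derivative rhs_v (v t) (p t)) (at t within {0..})"
    and dp: "(p has_real_derivative rhs_p (v t) (p t)) (at t within {0..})" if "0 \<le> t" for t
    using has_vector_derivative_PairD[of y] y[OF that] by (auto simp: v_def p_def rhs_def case_prod_beta)
  have "(p \<longlongrightarrow> 0) at_top"
    using lo(1) band dp by (rule Omega_band_tendsto_zero)
  moreover have bounds: "vlo \<le> v t \<and> v t \<le> vhi" if "0 \<le> t" for t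
    using band[OF that] by (simp add: Omega_band_def)
  moreover have "\<forall>t\<ge>0. v t > 0"
    using bounds lo(1) by (meson less_le_trans)
  moreover have "\<forall>t\<ge>0. (v t, p t) \<in> Omega c1"
    using band Omega_band_subset_Omega[OF lo(1)] by blast
  moreover have "v 0 = v0" "p 0 = p0"
    using \<open>y 0 = (v0, p0)\<close> by (simp_all add: v_def p_def)
  ultimately show ?thesis
    using lo(1) dv dp unfolding rhs_v_def rhs_p_def by blast
qed

end
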